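(* Let $x_0,\dots,x_{T-1}\stackrel{\text{i.i.d.}}{\sim}\mathcal{N}(0,I_d)$ and $\phi_t=\operatorname{svec}(x_tx_t^\top)$. There is a universal constant $c>0$ such that for every fixed unit vector $v\in\mathbb{R}^{d(d+1)/2}$ and every $\delta\in(0,1)$, $$\mathbb{P}\left(\sum_{t=0}^{T-1}(v^\top\phi_t)^2\ge2T-\sqrt{cTd^2\log(1/\delta)}\right)\ge1-\delta.$$
   Context: $\operatorname{svec}$ maps a symmetric $d\times d$ matrix $M$ to the vector in $\mathbb{R}^{d(d+1)/2}$ listing its diagonal entries $M_{ii}$ and its entries $\sqrt{2}\,M_{ij}$ for $i<j$ (in a fixed order), so that $\|\operatorname{svec}(M)\|_2=\|M\|_F$. *)

theory Defs
  imports "HOL-Probability.Probability"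
begin

definition std_gauss :: "real measure" where
  "std_gauss = density lborel std_normal_density"

text \<open>Law of x_0,...,x_{T-1} i.i.d. N(0,I_d): x t i is coordinate i of x_t.\<close>
definition gauss_sample :: "nat \<Rightarrow> nat \<Rightarrow> (nat \<Rightarrow> nat \<Rightarrow> real) measure" where
  "gauss_sample T d = PiM {..<T} (\<lambda>_. PiM {..<d} (\<lambda>_. std_gauss))"

definition svec_idx :: "nat \<Rightarrow> (nat \<times> nat) set" where
  "svec_idx d = {(i, j). i \<le> j \<and> j < d}"

definition svec :: "(nat \<Rightarrow> nat \<Rightarrow> real) \<Rightarrow> nat \<times> nat \<Rightarrow> real" where
  "svec M p = (if fst p = snd p then M (fst p) (snd p) else sqrt 2 * M (fst p) (snd p))"

definition outer :: "(nat \<Rightarrow> real) \<Rightarrow> nat \<Rightarrow> nat \<Rightarrow> real" where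
  "outer x = (\<lambda>i j. x i * x j)"

end

theory Submission
  imports Defs
begin

text \<open>
  Write \<open>Y(z) = v\<^sup>T svec(z z\<^sup>T)\<close> as a Gaussian quadratic form
  \<open>\<Sum>\<^sub>i a\<^sub>i z\<^sub>i\<^sup>2 + \<Sum>\<^sub>i\<^sub><\<^sub>j b\<^sub>i\<^sub>j z\<^sub>i z\<^sub>j\<close> with \<open>a\<^sub>i = v\<^sub>i\<^sub>i\<close> and
  \<open>b\<^sub>i\<^sub>j = sqrt 2 v\<^sub>i\<^sub>j\<close>, so that \<open>|v| = 1\<close> reads
  \<open>\<Sum> a\<^sub>i\<^sup>2 + \<Sum> b\<^sub>i\<^sub>j\<^sup>2 / 2 = 1\<close>.
  Integrating out one coordinate at a time (the integrands are quartic polynomials in it) gives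
  \<open>E Y\<^sup>2 = (\<Sum> a\<^sub>i)\<^sup>2 + 2 \<Sum> a\<^sub>i\<^sup>2 + \<Sum> b\<^sub>i\<^sub>j\<^sup>2 \<ge> 2\<close> and \<open>E Y\<^sup>4 = O(d\<^sup>2)\<close>.
  For the nonnegative variable \<open>X = Y\<^sup>2\<close> the bound \<open>exp(-u) \<le> 1 - u + u\<^sup>2/2\<close> gives
  \<open>E exp(-\<theta> X) \<le> exp(-\<theta> E X + \<theta>\<^sup>2 E X\<^sup>2 / 2)\<close>, so only the first two moments of \<open>X\<close>
  enter, and a Chernoff bound for the i.i.d. sum yields a sub-Gaussian lower tail with variance
  proxy \<open>T E X\<^sup>2\<close>.
\<close>

section \<open>Chernoff bounds for sums of i.i.d. nonnegative variables\<close>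

lemma exp_minus_le_Taylor2:
  fixes u :: real
  assumes "0 \<le> u"
  shows "exp (- u) \<le> 1 - u + u\<^sup>2 / 2"
proof -
  let ?h = "\<lambda>t::real. 1 - t + t\<^sup>2 / 2 - exp (- t)"
  have "?h 0 \<le> ?h u"
  proof (rule DERIV_nonneg_imp_increasing_open[OF assms])
    fix t :: real
    have "DERIV ?h t :> (t - 1 + exp (- t))"
      by (auto intro!: derivative_eq_intros)
    moreover have "0 \<le> t - 1 + exp (- t)"
      using exp_ge_add_one_self[of "- t"] by simp
    ultimately show "\<exists>y. DERIV ?h t :> y \<and> 0 \<le> y" by blast
  qed (auto intro!: continuous_intros)
  then show ?thesis by simp
qed

lemma (in finite_measure) integrable_exp_neg_mult:
  fixes f :: "'a \<Rightarrow> real"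
  assumes [measurable]: "f \<in> borel_measurable M"
    and nonneg: "\<And>x. x \<in> space M \<Longrightarrow> 0 \<le> f x" and "0 \<le> \<theta>"
  shows "integrable M (\<lambda>x. exp (- \<theta> * f x))"
  by (rule integrable_const_bound[where B = 1]) (use nonneg \<open>0 \<le> \<theta>\<close> in auto)

lemma (in prob_space) expectation_exp_neg_le:
  fixes X :: "'a \<Rightarrow> real"
  assumes nonneg: "\<And>x. x \<in> space M \<Longrightarrow> 0 \<le> X x"
    and X: "integrable M X" and X2: "integrable M (\<lambda>x. (X x)\<^sup>2)" and "0 \<le> \<theta>"
  shows "expectation (\<lambda>x. exp (- \<theta> * X x))
    \<le> exp (- \<theta> * expectation X + \<theta>\<^sup>2 / 2 * expectation (\<lambda>x. (X x)\<^sup>2))"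
proof -
  have "expectation (\<lambda>x. exp (- \<theta> * X x))
      \<le> expectation (\<lambda>x. 1 - \<theta> * X x + \<theta>\<^sup>2 / 2 * (X x)\<^sup>2)"
  proof (rule integral_mono)
    show "integrable M (\<lambda>x. exp (- \<theta> * X x))"
      using X nonneg \<open>0 \<le> \<theta>\<close> by (intro integrable_exp_neg_mult) auto
    show "integrable M (\<lambda>x. 1 - \<theta> * X x + \<theta>\<^sup>2 / 2 * (X x)\<^sup>2)"
      using X X2 by simp
    fix x assume "x \<in> space M"
    then have "exp (- (\<theta> * X x)) \<le> 1 - \<theta> * X x + (\<theta> * X x)\<^sup>2 / 2"
      using nonneg \<open>0 \<le> \<theta>\<close> by (intro exp_minus_le_Taylor2) simp
    then show "exp (- \<theta> * X x) \<le> 1 - \<theta> * X x + \<theta>\<^sup>2 / 2 * (X x)\<^sup>2"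
      by (simp add: power_mult_distrib)
  qed
  also have "\<dots> = 1 + (- \<theta> * expectation X + \<theta>\<^sup>2 / 2 * expectation (\<lambda>x. (X x)\<^sup>2))"
    using X X2 by (simp add: prob_space)
  also have "\<dots> \<le> exp (- \<theta> * expectation X + \<theta>\<^sup>2 / 2 * expectation (\<lambda>x. (X x)\<^sup>2))"
    by (rule exp_ge_add_one_self)
  finally show ?thesis .
qed

lemma Chernoff_ineq_PiM_sum_le:
  fixes f :: "'a \<Rightarrow> real"
  assumes M: "prob_space M" and [measurable]: "f \<in> borel_measurable M"
    and nonneg: "\<And>x. x \<in> space M \<Longrightarrow> 0 \<le> f x" and "0 < \<theta>"
  shows "measure (PiM {..<T} (\<lambda>_. M)) {x \<in> space (PiM {..<T} (\<lambda>_. M)). (\<Sum>t<T. f (x t)) \<le> a}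
    \<le> exp (\<theta> * a) * (\<integral>z. exp (- \<theta> * f z) \<partial>M) ^ T"
proof -
  interpret M: prob_space M by (rule M)
  interpret product_sigma_finite "\<lambda>_. M"
    by (intro product_sigma_finite.intro M.sigma_finite_measure)
  interpret P: prob_space "PiM {..<T} (\<lambda>_. M)"
    by (intro prob_space_PiM M)
  let ?S = "\<lambda>x. \<Sum>t<T. f (x t)"
  have exp_f: "integrable M (\<lambda>z. exp (- \<theta> * f z))"
    using nonneg \<open>0 < \<theta>\<close> by (intro M.integrable_exp_neg_mult) auto
  have exp_S: "exp (- \<theta> * ?S x) = (\<Prod>t<T. exp (- \<theta> * f (x t)))" for x
    by (simp add: sum_distrib_left exp_sum)
  have exp_S_int: "integrable (PiM {..<T} (\<lambda>_. M)) (\<lambda>x. exp (- \<theta> * ?S x))"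
    unfolding exp_S using exp_f by (intro product_integrable_prod) auto
  then have "set_integrable (PiM {..<T} (\<lambda>_. M)) (space (PiM {..<T} (\<lambda>_. M))) (\<lambda>x. exp (- \<theta> * ?S x))"
    unfolding set_integrable_def by (rule integrable_mult_indicator[OF sets.top])
  then have "measure (PiM {..<T} (\<lambda>_. M)) {x \<in> space (PiM {..<T} (\<lambda>_. M)). ?S x \<le> a}
      \<le> exp (\<theta> * a) * (\<integral>x \<in> space (PiM {..<T} (\<lambda>_. M)). exp (- \<theta> * ?S x) \<partial>PiM {..<T} (\<lambda>_. M))"
    by (intro P.Chernoff_ineq_le \<open>0 < \<theta>\<close>) simp_all
  also have "\<dots> = exp (\<theta> * a) * (\<integral>x. exp (- \<theta> * ?S x) \<partial>PiM {..<T} (\<lambda>_. M))"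
    using exp_S_int by (simp add: set_integral_space)
  also have "(\<integral>x. exp (- \<theta> * ?S x) \<partial>PiM {..<T} (\<lambda>_. M)) = (\<integral>z. exp (- \<theta> * f z) \<partial>M) ^ T"
    unfolding exp_S using exp_f by (subst product_integral_prod) auto
  finally show ?thesis .
qed

lemma measure_PiM_sum_le_sub_gaussian:
  fixes f :: "'a \<Rightarrow> real" and T :: nat
  assumes M: "prob_space M" and nonneg: "\<And>x. x \<in> space M \<Longrightarrow> 0 \<le> f x"
    and f: "integrable M f" and f2: "integrable M (\<lambda>x. (f x)\<^sup>2)"
    and mean: "\<mu> \<le> (\<integral>x. f x \<partial>M)" and second: "(\<integral>x. (f x)\<^sup>2 \<partial>M) \<le> \<sigma>"
    and "0 < T" "0 < \<sigma>" "0 < s"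
  shows "measure (PiM {..<T} (\<lambda>_. M))
      {x \<in> space (PiM {..<T} (\<lambda>_. M)). (\<Sum>t<T. f (x t)) \<le> real T * \<mu> - s}
    \<le> exp (- s\<^sup>2 / (2 * real T * \<sigma>))"
proof -
  interpret M: prob_space M by (rule M)
  have [measurable]: "f \<in> borel_measurable M" using f by simp
  \<comment> \<open>the minimiser of the exponent \<open>-\<theta> s + T \<sigma> \<theta>\<^sup>2 / 2\<close> below\<close>
  define \<theta> where "\<theta> = s / (real T * \<sigma>)"
  have "0 < \<theta>" unfolding \<theta>_def using \<open>0 < T\<close> \<open>0 < \<sigma>\<close> \<open>0 < s\<close> by simp
  have "M.expectation (\<lambda>z. exp (- \<theta> * f z))
      \<le> exp (- \<theta> * M.expectation f + \<theta>\<^sup>2 / 2 * M.expectation (\<lambda>x. (f x)\<^sup>2))"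
    using nonneg f f2 \<open>0 < \<theta>\<close> by (intro M.expectation_exp_neg_le) simp_all
  also have "\<dots> \<le> exp (- \<theta> * \<mu> + \<theta>\<^sup>2 / 2 * \<sigma>)"
  proof -
    have "\<theta> * \<mu> \<le> \<theta> * M.expectation f"
      using mean \<open>0 < \<theta>\<close> by (simp add: mult_left_mono)
    moreover have "\<theta>\<^sup>2 / 2 * M.expectation (\<lambda>x. (f x)\<^sup>2) \<le> \<theta>\<^sup>2 / 2 * \<sigma>"
      using second by (simp add: mult_left_mono)
    ultimately show ?thesis by simp
  qed
  finally have mgf: "M.expectation (\<lambda>z. exp (- \<theta> * f z)) \<le> exp (- \<theta> * \<mu> + \<theta>\<^sup>2 / 2 * \<sigma>)" .
  have "measure (PiM {..<T} (\<lambda>_. M))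
      {x \<in> space (PiM {..<T} (\<lambda>_. M)). (\<Sum>t<T. f (x t)) \<le> real T * \<mu> - s}
      \<le> exp (\<theta> * (real T * \<mu> - s)) * M.expectation (\<lambda>z. exp (- \<theta> * f z)) ^ T"
    using nonneg \<open>0 < \<theta>\<close> by (intro Chernoff_ineq_PiM_sum_le M) simp_all
  also have "\<dots> \<le> exp (\<theta> * (real T * \<mu> - s)) * exp (- \<theta> * \<mu> + \<theta>\<^sup>2 / 2 * \<sigma>) ^ T"
    using mgf by (intro mult_left_mono power_mono) simp_all
  also have "\<dots> = exp (- \<theta> * s + real T * \<sigma> / 2 * \<theta>\<^sup>2)"
    by (simp add: exp_add[symmetric] exp_of_nat_mult[symmetric] algebra_simps)
  also have "\<dots> = exp (- s\<^sup>2 / (2 * real T * \<sigma>))"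
    unfolding \<theta>_def using \<open>0 < T\<close> \<open>0 < \<sigma>\<close> by (simp add: field_simps power2_eq_square)
  finally show ?thesis .
qed

theorem measure_PiM_sum_lower_tail:
  fixes f :: "'a \<Rightarrow> real" and T :: nat
  assumes M: "prob_space M" and nonneg: "\<And>x. x \<in> space M \<Longrightarrow> 0 \<le> f x"
    and f: "integrable M f" and f2: "integrable M (\<lambda>x. (f x)\<^sup>2)"
    and mean: "\<mu> \<le> (\<integral>x. f x \<partial>M)" and second: "(\<integral>x. (f x)\<^sup>2 \<partial>M) \<le> \<sigma>" and "0 < \<sigma>"
    and "0 < \<delta>" "\<delta> < 1"
  shows "measure (PiM {..<T} (\<lambda>_. M))
      {x \<in> space (PiM {..<T} (\<lambda>_. M)).
        (\<Sum>t<T. f (x t)) \<ge> real T * \<mu> - sqrt (2 * real T * \<sigma> * ln (1 / \<delta>))}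
    \<ge> 1 - \<delta>"
    (is "measure ?P {x \<in> space ?P. ?S x \<ge> real T * \<mu> - ?s} \<ge> 1 - \<delta>")
proof -
  interpret P: prob_space ?P by (intro prob_space_PiM M)
  have [measurable]: "f \<in> borel_measurable M" using f by simp
  show ?thesis
  proof (cases "T = 0")
    case True
    then have "{x \<in> space ?P. ?S x \<ge> real T * \<mu> - ?s} = space ?P" by simp
    then show ?thesis using \<open>0 < \<delta>\<close> by (simp add: P.prob_space)
  next
    case False
    have "0 < ln (1 / \<delta>)" using \<open>0 < \<delta>\<close> \<open>\<delta> < 1\<close> by simp
    then have "0 < ?s" using False \<open>0 < \<sigma>\<close> by simp
    have "measure ?P {x \<in> space ?P. ?S x \<le> real T * \<mu> - ?s} \<le> exp (- ?s\<^sup>2 / (2 * real T * \<sigma>))"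
      using False \<open>0 < \<sigma>\<close> \<open>0 < ?s\<close>
      by (intro measure_PiM_sum_le_sub_gaussian[OF M nonneg f f2 mean second]) simp_all
    also have "\<dots> = exp (- ln (1 / \<delta>))"
      using False \<open>0 < \<sigma>\<close> \<open>0 < ln (1 / \<delta>)\<close> by simp
    also have "\<dots> = \<delta>"
      using \<open>0 < \<delta>\<close> by (simp add: ln_div)
    finally have "1 - \<delta> \<le> measure ?P (space ?P - {x \<in> space ?P. ?S x \<le> real T * \<mu> - ?s})"
      by (subst P.prob_compl) auto
    also have "\<dots> \<le> measure ?P {x \<in> space ?P. ?S x \<ge> real T * \<mu> - ?s}"
      by (intro P.finite_measure_mono) auto
    finally show ?thesis .
  qed
qed

section \<open>Functions with finite moments of all orders\<close>

lemma integral_mult_sq_le: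
  fixes f g :: "'a \<Rightarrow> real"
  assumes [measurable]: "f \<in> borel_measurable M" "g \<in> borel_measurable M"
    and f2: "integrable M (\<lambda>x. (f x)\<^sup>2)" and g2: "integrable M (\<lambda>x. (g x)\<^sup>2)"
  shows "(\<integral>x. f x * g x \<partial>M)\<^sup>2 \<le> (\<integral>x. (f x)\<^sup>2 \<partial>M) * (\<integral>x. (g x)\<^sup>2 \<partial>M)"
proof -
  have fg: "integrable M (\<lambda>x. f x * g x)"
  proof (rule Bochner_Integration.integrable_bound[OF Bochner_Integration.integrable_add[OF f2 g2]])
    show "AE x in M. norm (f x * g x) \<le> norm ((f x)\<^sup>2 + (g x)\<^sup>2)"
    proof (intro AE_I2)
      fix x
      have "2 * (\<bar>f x\<bar> * \<bar>g x\<bar>) \<le> (f x)\<^sup>2 + (g x)\<^sup>2"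
        using sum_squares_bound[of "\<bar>f x\<bar>" "\<bar>g x\<bar>"] by simp
      then have "\<bar>f x * g x\<bar> \<le> (f x)\<^sup>2 + (g x)\<^sup>2"
        using abs_mult[of "f x" "g x"] mult_nonneg_nonneg[OF abs_ge_zero abs_ge_zero, of "f x" "g x"]
        by linarith
      then show "norm (f x * g x) \<le> norm ((f x)\<^sup>2 + (g x)\<^sup>2)" by simp
    qed
  qed measurable
  define A B C where "A = (\<integral>x. (f x)\<^sup>2 \<partial>M)" and "B = (\<integral>x. (g x)\<^sup>2 \<partial>M)"
    and "C = (\<integral>x. f x * g x \<partial>M)"
  show ?thesis
  proof (cases "B = 0")
    case True
    then have "AE x in M. (g x)\<^sup>2 = 0"
      using integral_nonneg_eq_0_iff_AE[OF g2] unfolding B_def by simp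
    then have "C = 0"
      unfolding C_def by (intro integral_eq_zero_AE) auto
    with True show ?thesis unfolding A_def B_def C_def by simp
  next
    case False
    then have "0 < B" unfolding B_def by (simp add: order_neq_le_trans)
    define t where "t = C / B"
    have "0 \<le> (\<integral>x. (f x - t * g x)\<^sup>2 \<partial>M)" by simp
    also have "\<dots> = (\<integral>x. (f x)\<^sup>2 - 2 * t * (f x * g x) + t\<^sup>2 * (g x)\<^sup>2 \<partial>M)"
      by (simp add: power2_diff power_mult_distrib algebra_simps)
    also have "\<dots> = A - 2 * t * C + t\<^sup>2 * B"
      unfolding A_def B_def C_def using f2 g2 fg by simp
    also have "\<dots> = A - C\<^sup>2 / B"
      unfolding t_def using \<open>0 < B\<close> by (simp add: field_simps power2_eq_square)
    finally show ?thesis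
      using \<open>0 < B\<close> unfolding A_def B_def C_def by (simp add: field_simps)
  qed
qed

definition has_all_moments :: "'a measure \<Rightarrow> ('a \<Rightarrow> real) \<Rightarrow> bool" where
  "has_all_moments M f \<longleftrightarrow> f \<in> borel_measurable M \<and> (\<forall>k. integrable M (\<lambda>x. \<bar>f x\<bar> ^ k))"

lemma has_all_moments_measurable: "has_all_moments M f \<Longrightarrow> f \<in> borel_measurable M"
  unfolding has_all_moments_def by blast

lemma has_all_moments_integrable:
  assumes "has_all_moments M f"
  shows "integrable M f"
proof -
  have "integrable M (\<lambda>x. \<bar>f x\<bar> ^ 1)" and "f \<in> borel_measurable M"
    using assms unfolding has_all_moments_def by blast+
  then show ?thesis by (simp add: integrable_abs_iff)
qed

lemma has_all_moments_const: "finite_measure M \<Longrightarrow> has_all_moments M (\<lambda>_. c)"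
  unfolding has_all_moments_def by (simp add: finite_measure.integrable_const)

lemma has_all_moments_add:
  assumes f: "has_all_moments M f" and g: "has_all_moments M g"
  shows "has_all_moments M (\<lambda>x. f x + g x)"
proof -
  have [measurable]: "f \<in> borel_measurable M" "g \<in> borel_measurable M"
    using f g by (simp_all add: has_all_moments_measurable)
  have "integrable M (\<lambda>x. \<bar>f x + g x\<bar> ^ k)" for k
  proof (rule Bochner_Integration.integrable_bound)
    show "integrable M (\<lambda>x. 2 ^ k * (\<bar>f x\<bar> ^ k + \<bar>g x\<bar> ^ k))"
      using f g unfolding has_all_moments_def by simp
    show "AE x in M. norm (\<bar>f x + g x\<bar> ^ k) \<le> norm (2 ^ k * (\<bar>f x\<bar> ^ k + \<bar>g x\<bar> ^ k))"
    proof (intro AE_I2)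
      fix x
      have "\<bar>f x + g x\<bar> ^ k \<le> (2 * max \<bar>f x\<bar> \<bar>g x\<bar>) ^ k"
        by (rule power_mono) auto
      also have "\<dots> \<le> 2 ^ k * (\<bar>f x\<bar> ^ k + \<bar>g x\<bar> ^ k)"
        by (auto simp: power_mult_distrib max_def)
      finally show "norm (\<bar>f x + g x\<bar> ^ k) \<le> norm (2 ^ k * (\<bar>f x\<bar> ^ k + \<bar>g x\<bar> ^ k))"
        by simp
    qed
  qed measurable
  moreover have "(\<lambda>x. f x + g x) \<in> borel_measurable M" by measurable
  ultimately show ?thesis unfolding has_all_moments_def by blast
qed

lemma has_all_moments_mult:
  assumes f: "has_all_moments M f" and g: "has_all_moments M g"
  shows "has_all_moments M (\<lambda>x. f x * g x)"
proof -
  have [measurable]: "f \<in> borel_measurable M" "g \<in> borel_measurable M"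
    using f g by (simp_all add: has_all_moments_measurable)
  have "integrable M (\<lambda>x. \<bar>f x * g x\<bar> ^ k)" for k
  proof (rule Bochner_Integration.integrable_bound)
    show "integrable M (\<lambda>x. \<bar>f x\<bar> ^ (2 * k) + \<bar>g x\<bar> ^ (2 * k))"
      using f g unfolding has_all_moments_def by simp
    show "AE x in M. norm (\<bar>f x * g x\<bar> ^ k) \<le> norm (\<bar>f x\<bar> ^ (2 * k) + \<bar>g x\<bar> ^ (2 * k))"
    proof (intro AE_I2)
      fix x
      have "\<bar>f x * g x\<bar> ^ k = \<bar>f x\<bar> ^ k * \<bar>g x\<bar> ^ k"
        by (simp add: abs_mult power_mult_distrib)
      also have "\<dots> \<le> 2 * \<bar>f x\<bar> ^ k * \<bar>g x\<bar> ^ k" by simp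
      also have "\<dots> \<le> (\<bar>f x\<bar> ^ k)\<^sup>2 + (\<bar>g x\<bar> ^ k)\<^sup>2" by (rule sum_squares_bound)
      also have "\<dots> = \<bar>f x\<bar> ^ (2 * k) + \<bar>g x\<bar> ^ (2 * k)"
        by (simp add: power_mult[symmetric] mult.commute)
      finally show "norm (\<bar>f x * g x\<bar> ^ k) \<le> norm (\<bar>f x\<bar> ^ (2 * k) + \<bar>g x\<bar> ^ (2 * k))"
        by simp
    qed
  qed measurable
  moreover have "(\<lambda>x. f x * g x) \<in> borel_measurable M" by measurable
  ultimately show ?thesis unfolding has_all_moments_def by blast
qed

lemma has_all_moments_power:
  "finite_measure M \<Longrightarrow> has_all_moments M f \<Longrightarrow> has_all_moments M (\<lambda>x. f x ^ k)"
  by (induction k) (simp_all add: has_all_moments_const has_all_moments_mult)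

lemma has_all_moments_sum:
  "finite_measure M \<Longrightarrow> (\<And>i. i \<in> I \<Longrightarrow> has_all_moments M (f i))
    \<Longrightarrow> has_all_moments M (\<lambda>x. \<Sum>i\<in>I. f i x)"
  by (induction I rule: infinite_finite_induct) (simp_all add: has_all_moments_const has_all_moments_add)

lemmas has_all_moments_intros =
  has_all_moments_const has_all_moments_add has_all_moments_mult has_all_moments_power
  has_all_moments_sum

section \<open>Standard Gaussian vectors\<close>

lemma prob_space_std_gauss: "prob_space std_gauss"
  unfolding std_gauss_def by (rule prob_space_normal_density) simp

lemma space_std_gauss [simp]: "space std_gauss = UNIV"
  unfolding std_gauss_def by simp

lemma sets_std_gauss [simp]: "sets std_gauss = sets borel"
  unfolding std_gauss_def by simp

lemma integral_std_gauss_power: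
  "integrable std_gauss (\<lambda>y. y ^ k)"
  "(\<integral>y. y ^ k \<partial>std_gauss) = (\<integral>y. std_normal_density y * y ^ k \<partial>lborel)"
  unfolding std_gauss_def
  by (subst integrable_density integral_density; simp add: integrable_std_normal_moment)+

lemma integral_std_gauss_quartic:
  "(\<integral>y. a0 + a1 * y + a2 * y\<^sup>2 + a3 * y ^ 3 + a4 * y ^ 4 \<partial>std_gauss) = a0 + a2 + 3 * a4"
proof -
  interpret prob_space std_gauss by (rule prob_space_std_gauss)
  have "(\<integral>y. y ^ 1 \<partial>std_gauss) = 0"
    using integral_std_gauss_power(2)[of 1] integral_std_normal_moment_odd[of 0] by simp
  moreover have "(\<integral>y. y ^ 2 \<partial>std_gauss) = 1"
    using integral_std_gauss_power(2)[of 2] integral_std_normal_moment_even[of 1] by simp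
  moreover have "(\<integral>y. y ^ 3 \<partial>std_gauss) = 0"
    using integral_std_gauss_power(2)[of 3] integral_std_normal_moment_odd[of 1] by simp
  moreover have "(\<integral>y. y ^ 4 \<partial>std_gauss) = 3"
    using integral_std_gauss_power(2)[of 4] integral_std_normal_moment_even[of 2] by (simp add: fact_numeral)
  ultimately show ?thesis
    using integral_std_gauss_power(1)[of 1] integral_std_gauss_power(1)[of 2]
      integral_std_gauss_power(1)[of 3] integral_std_gauss_power(1)[of 4] prob_space
    by simp
qed

definition std_gauss_vec :: "nat \<Rightarrow> (nat \<Rightarrow> real) measure" where
  "std_gauss_vec n = PiM {..<n} (\<lambda>_. std_gauss)"

lemma prob_space_std_gauss_vec: "prob_space (std_gauss_vec n)"
  unfolding std_gauss_vec_def by (intro prob_space_PiM prob_space_std_gauss)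

lemma finite_measure_std_gauss_vec [simp]: "finite_measure (std_gauss_vec n)"
  using prob_space_std_gauss_vec unfolding prob_space_def by blast

lemma measure_space_std_gauss_vec [simp]: "measure (std_gauss_vec n) (space (std_gauss_vec n)) = 1"
  using prob_space.prob_space[OF prob_space_std_gauss_vec] .

lemma std_gauss_vec_marginal:
  fixes g :: "real \<Rightarrow> real"
  assumes "i < n" and g: "g \<in> borel_measurable borel"
  shows "integrable (std_gauss_vec n) (\<lambda>x. g (x i)) \<longleftrightarrow> integrable std_gauss g"
    and "(\<integral>x. g (x i) \<partial>std_gauss_vec n) = (\<integral>y. g y \<partial>std_gauss)"
proof -
  have coord: "(\<lambda>x. x i) \<in> measurable (std_gauss_vec n) std_gauss"
    unfolding std_gauss_vec_def using assms by (intro measurable_component_singleton) auto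
  have "g \<in> borel_measurable std_gauss"
    using g by (simp add: measurable_cong_sets[OF sets_std_gauss refl])
  moreover have "distr (std_gauss_vec n) std_gauss (\<lambda>x. x i) = std_gauss"
    unfolding std_gauss_vec_def using assms
    by (intro distr_PiM_component prob_space_std_gauss) auto
  ultimately show "integrable (std_gauss_vec n) (\<lambda>x. g (x i)) \<longleftrightarrow> integrable std_gauss g"
    and "(\<integral>x. g (x i) \<partial>std_gauss_vec n) = (\<integral>y. g y \<partial>std_gauss)"
    using integrable_distr_eq[OF coord] integral_distr[OF coord] by metis+
qed

lemma has_all_moments_coordinate:
  assumes "i < n"
  shows "has_all_moments (std_gauss_vec n) (\<lambda>x. x i)"
  unfolding has_all_moments_def
proof
  show "(\<lambda>x. x i) \<in> borel_measurable (std_gauss_vec n)"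
    unfolding std_gauss_vec_def using assms
    by (subst measurable_cong_sets[OF refl sets_std_gauss[symmetric]])
      (intro measurable_component_singleton, auto)
  show "\<forall>k. integrable (std_gauss_vec n) (\<lambda>x. \<bar>x i\<bar> ^ k)"
  proof
    fix k
    have "integrable std_gauss (\<lambda>y. \<bar>y ^ k\<bar>)"
      using integral_std_gauss_power(1) by (rule integrable_abs)
    then show "integrable (std_gauss_vec n) (\<lambda>x. \<bar>x i\<bar> ^ k)"
      using std_gauss_vec_marginal(1)[OF assms, of "\<lambda>y. \<bar>y\<bar> ^ k"] by (simp add: power_abs)
  qed
qed

lemma integral_std_gauss_vec_Suc:
  fixes F :: "(nat \<Rightarrow> real) \<Rightarrow> 'a::{banach, second_countable_topology}"
  assumes "integrable (std_gauss_vec (Suc n)) F"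
  shows "(\<integral>x. F x \<partial>std_gauss_vec (Suc n))
    = (\<integral>x. (\<integral>y. F (x(n := y)) \<partial>std_gauss) \<partial>std_gauss_vec n)"
proof -
  interpret product_sigma_finite "\<lambda>_. std_gauss"
    by (intro product_sigma_finite.intro prob_space_imp_sigma_finite prob_space_std_gauss)
  have "{..<Suc n} = insert n {..<n}" by auto
  then show ?thesis
    using assms product_integral_insert[of "{..<n}" n F] unfolding std_gauss_vec_def by simp
qed

lemma integral_std_gauss_vec_Suc_quartic:
  assumes "integrable (std_gauss_vec (Suc n)) F"
    and "integrable (std_gauss_vec n) a0" "integrable (std_gauss_vec n) a2"
      "integrable (std_gauss_vec n) a4"
    and "\<And>x y. F (x(n := y)) = a0 x + a1 x * y + a2 x * y\<^sup>2 + a3 x * y ^ 3 + a4 x * y ^ 4"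
  shows "(\<integral>x. F x \<partial>std_gauss_vec (Suc n))
    = (\<integral>x. a0 x \<partial>std_gauss_vec n) + (\<integral>x. a2 x \<partial>std_gauss_vec n)
      + 3 * (\<integral>x. a4 x \<partial>std_gauss_vec n)"
  using assms by (simp add: integral_std_gauss_vec_Suc integral_std_gauss_quartic)

section \<open>Moments of Gaussian quadratic forms\<close>

definition lin_form :: "(nat \<Rightarrow> real) \<Rightarrow> nat \<Rightarrow> (nat \<Rightarrow> real) \<Rightarrow> real" where
  "lin_form c n x = (\<Sum>i<n. c i * x i)"

definition diag_form :: "(nat \<Rightarrow> real) \<Rightarrow> nat \<Rightarrow> (nat \<Rightarrow> real) \<Rightarrow> real" where
  "diag_form a n x = (\<Sum>i<n. a i * (x i)\<^sup>2)"

text \<open>\<open>upper_form b n x = \<Sum>\<^sub>i\<^sub><\<^sub>j\<^sub><\<^sub>n b i j * x i * x j\<close>, grouped by the larger index so that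
  the last coordinate splits off linearly.\<close>

definition upper_form :: "(nat \<Rightarrow> nat \<Rightarrow> real) \<Rightarrow> nat \<Rightarrow> (nat \<Rightarrow> real) \<Rightarrow> real" where
  "upper_form b n x = (\<Sum>j<n. lin_form (\<lambda>i. b i j) j x * x j)"

definition quad_form ::
    "(nat \<Rightarrow> real) \<Rightarrow> (nat \<Rightarrow> nat \<Rightarrow> real) \<Rightarrow> nat \<Rightarrow> (nat \<Rightarrow> real) \<Rightarrow> real" where
  "quad_form a b n x = diag_form a n x + upper_form b n x"

definition upper_sq_sum :: "(nat \<Rightarrow> nat \<Rightarrow> real) \<Rightarrow> nat \<Rightarrow> real" where
  "upper_sq_sum b n = (\<Sum>j<n. \<Sum>i<j. (b i j)\<^sup>2)"

lemma lin_form_Suc: "lin_form c (Suc n) x = lin_form c n x + c n * x n"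
  by (simp add: lin_form_def)

lemma diag_form_Suc: "diag_form a (Suc n) x = diag_form a n x + a n * (x n)\<^sup>2"
  by (simp add: diag_form_def)

lemma upper_form_Suc: "upper_form b (Suc n) x = upper_form b n x + lin_form (\<lambda>i. b i n) n x * x n"
  by (simp add: upper_form_def)

lemma lin_form_upd: "n \<le> m \<Longrightarrow> lin_form c n (x(m := y)) = lin_form c n x"
  unfolding lin_form_def by (intro sum.cong) auto

lemma diag_form_upd: "n \<le> m \<Longrightarrow> diag_form a n (x(m := y)) = diag_form a n x"
  unfolding diag_form_def by (intro sum.cong) auto

lemma upper_form_upd: "n \<le> m \<Longrightarrow> upper_form b n (x(m := y)) = upper_form b n x"
  unfolding upper_form_def by (intro sum.cong) (auto simp: lin_form_upd)

lemmas forms_Suc_upd = lin_form_Suc diag_form_Suc upper_form_Suc lin_form_upd diag_form_upd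
  upper_form_upd

lemma has_all_moments_lin_form: "m \<le> n \<Longrightarrow> has_all_moments (std_gauss_vec n) (lin_form c m)"
  unfolding lin_form_def[abs_def]
  by (intro has_all_moments_intros has_all_moments_coordinate) auto

lemma has_all_moments_diag_form: "m \<le> n \<Longrightarrow> has_all_moments (std_gauss_vec n) (diag_form a m)"
  unfolding diag_form_def[abs_def]
  by (intro has_all_moments_intros has_all_moments_coordinate) auto

lemma has_all_moments_upper_form: "m \<le> n \<Longrightarrow> has_all_moments (std_gauss_vec n) (upper_form b m)"
  unfolding upper_form_def[abs_def]
  by (intro has_all_moments_intros has_all_moments_coordinate has_all_moments_lin_form) auto

lemma has_all_moments_quad_form: "m \<le> n \<Longrightarrow> has_all_moments (std_gauss_vec n) (quad_form a b m)"
  unfolding quad_form_def[abs_def]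
  by (intro has_all_moments_intros has_all_moments_diag_form has_all_moments_upper_form)

lemmas has_all_moments_forms = has_all_moments_lin_form has_all_moments_diag_form
  has_all_moments_upper_form has_all_moments_quad_form

lemma integral_lin_form_sq:
  "(\<integral>x. (lin_form c n x)\<^sup>2 \<partial>std_gauss_vec n) = (\<Sum>i<n. (c i)\<^sup>2)"
proof (induction n)
  case 0
  then show ?case by (simp add: lin_form_def)
next
  case (Suc n)
  have "(\<integral>x. (lin_form c (Suc n) x)\<^sup>2 \<partial>std_gauss_vec (Suc n))
      = (\<integral>x. (lin_form c n x)\<^sup>2 \<partial>std_gauss_vec n) + (\<integral>x. (c n)\<^sup>2 \<partial>std_gauss_vec n)
        + 3 * (\<integral>x. 0 \<partial>std_gauss_vec n)"
  proof (rule integral_std_gauss_vec_Suc_quartic)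
    fix x y
    show "(lin_form c (Suc n) (x(n := y)))\<^sup>2 = (lin_form c n x)\<^sup>2 + 2 * c n * lin_form c n x * y
      + (c n)\<^sup>2 * y\<^sup>2 + 0 * y ^ 3 + 0 * y ^ 4"
      by (simp add: forms_Suc_upd power2_eq_square algebra_simps)
  qed (intro has_all_moments_integrable has_all_moments_intros has_all_moments_forms; simp)+
  with Suc.IH show ?case by simp
qed

lemma integral_lin_form_pow4:
  "(\<integral>x. (lin_form c n x) ^ 4 \<partial>std_gauss_vec n) = 3 * (\<Sum>i<n. (c i)\<^sup>2)\<^sup>2"
proof (induction n)
  case 0
  then show ?case by (simp add: lin_form_def)
next
  case (Suc n)
  let ?L = "lin_form c n"
  have "(\<integral>x. (lin_form c (Suc n) x) ^ 4 \<partial>std_gauss_vec (Suc n))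
      = (\<integral>x. (?L x) ^ 4 \<partial>std_gauss_vec n) + (\<integral>x. 6 * (c n)\<^sup>2 * (?L x)\<^sup>2 \<partial>std_gauss_vec n)
        + 3 * (\<integral>x. (c n) ^ 4 \<partial>std_gauss_vec n)"
  proof (rule integral_std_gauss_vec_Suc_quartic)
    fix x y
    show "(lin_form c (Suc n) (x(n := y))) ^ 4 = (?L x) ^ 4 + 4 * c n * (?L x) ^ 3 * y
      + 6 * (c n)\<^sup>2 * (?L x)\<^sup>2 * y\<^sup>2 + 4 * (c n) ^ 3 * ?L x * y ^ 3 + (c n) ^ 4 * y ^ 4"
      by (simp add: forms_Suc_upd) algebra
  qed (intro has_all_moments_integrable has_all_moments_intros has_all_moments_forms; simp)+
  also have "\<dots> = 3 * (\<Sum>i<n. (c i)\<^sup>2)\<^sup>2 + 6 * (c n)\<^sup>2 * (\<Sum>i<n. (c i)\<^sup>2) + 3 * (c n) ^ 4"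
    using Suc.IH integral_lin_form_sq[of n c] by simp
  also have "\<dots> = 3 * (\<Sum>i<Suc n. (c i)\<^sup>2)\<^sup>2"
    by (simp add: power2_eq_square algebra_simps power4_eq_xxxx)
  finally show ?case .
qed

lemma integral_quad_form:
  "(\<integral>x. quad_form a b n x \<partial>std_gauss_vec n) = (\<Sum>i<n. a i)"
proof (induction n)
  case 0
  then show ?case by (simp add: quad_form_def diag_form_def upper_form_def)
next
  case (Suc n)
  have "(\<integral>x. quad_form a b (Suc n) x \<partial>std_gauss_vec (Suc n))
      = (\<integral>x. quad_form a b n x \<partial>std_gauss_vec n) + (\<integral>x. a n \<partial>std_gauss_vec n)
        + 3 * (\<integral>x. 0 \<partial>std_gauss_vec n)"
  proof (rule integral_std_gauss_vec_Suc_quartic)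
    fix x y
    show "quad_form a b (Suc n) (x(n := y)) = quad_form a b n x + lin_form (\<lambda>i. b i n) n x * y
      + a n * y\<^sup>2 + 0 * y ^ 3 + 0 * y ^ 4"
      by (simp add: quad_form_def forms_Suc_upd)
  qed (intro has_all_moments_integrable has_all_moments_intros has_all_moments_forms; simp)+
  with Suc.IH show ?case by simp
qed

lemma integral_quad_form_sq:
  "(\<integral>x. (quad_form a b n x)\<^sup>2 \<partial>std_gauss_vec n)
    = (\<Sum>i<n. a i)\<^sup>2 + 2 * (\<Sum>i<n. (a i)\<^sup>2) + upper_sq_sum b n"
proof (induction n)
  case 0
  then show ?case by (simp add: quad_form_def diag_form_def upper_form_def upper_sq_sum_def)
next
  case (Suc n)
  let ?Q = "quad_form a b n" and ?L = "lin_form (\<lambda>i. b i n) n"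
  have "(\<integral>x. (quad_form a b (Suc n) x)\<^sup>2 \<partial>std_gauss_vec (Suc n))
      = (\<integral>x. (?Q x)\<^sup>2 \<partial>std_gauss_vec n) + (\<integral>x. (?L x)\<^sup>2 + 2 * a n * ?Q x \<partial>std_gauss_vec n)
        + 3 * (\<integral>x. (a n)\<^sup>2 \<partial>std_gauss_vec n)"
  proof (rule integral_std_gauss_vec_Suc_quartic)
    fix x y
    show "(quad_form a b (Suc n) (x(n := y)))\<^sup>2 = (?Q x)\<^sup>2 + 2 * ?Q x * ?L x * y
      + ((?L x)\<^sup>2 + 2 * a n * ?Q x) * y\<^sup>2 + 2 * a n * ?L x * y ^ 3 + (a n)\<^sup>2 * y ^ 4"
      by (simp add: quad_form_def forms_Suc_upd) algebra
  qed (intro has_all_moments_integrable has_all_moments_intros has_all_moments_forms; simp)+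
  also have "(\<integral>x. (?L x)\<^sup>2 + 2 * a n * ?Q x \<partial>std_gauss_vec n)
      = (\<Sum>i<n. (b i n)\<^sup>2) + 2 * a n * (\<Sum>i<n. a i)"
  proof -
    have "integrable (std_gauss_vec n) (\<lambda>x. (?L x)\<^sup>2)"
      and "integrable (std_gauss_vec n) (\<lambda>x. 2 * a n * ?Q x)"
      by (intro has_all_moments_integrable has_all_moments_intros has_all_moments_forms; simp)+
    then show ?thesis
      by (simp add: Bochner_Integration.integral_add integral_lin_form_sq integral_quad_form)
  qed
  finally show ?case
    using Suc.IH by (simp add: upper_sq_sum_def power2_eq_square algebra_simps)
qed

lemma upper_sq_sum_nonneg: "0 \<le> upper_sq_sum b n"
  unfolding upper_sq_sum_def by (intro sum_nonneg) auto

lemma integral_upper_form_Suc_pow4: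
  "(\<integral>x. (upper_form b (Suc n) x) ^ 4 \<partial>std_gauss_vec (Suc n))
    = (\<integral>x. (upper_form b n x) ^ 4 \<partial>std_gauss_vec n)
      + 6 * (\<integral>x. (upper_form b n x)\<^sup>2 * (lin_form (\<lambda>i. b i n) n x)\<^sup>2 \<partial>std_gauss_vec n)
      + 3 * (\<integral>x. (lin_form (\<lambda>i. b i n) n x) ^ 4 \<partial>std_gauss_vec n)"
proof -
  let ?O = "upper_form b n" and ?L = "lin_form (\<lambda>i. b i n) n"
  have "(\<integral>x. (upper_form b (Suc n) x) ^ 4 \<partial>std_gauss_vec (Suc n))
      = (\<integral>x. (?O x) ^ 4 \<partial>std_gauss_vec n) + (\<integral>x. 6 * ((?O x)\<^sup>2 * (?L x)\<^sup>2) \<partial>std_gauss_vec n)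
        + 3 * (\<integral>x. (?L x) ^ 4 \<partial>std_gauss_vec n)"
  proof (rule integral_std_gauss_vec_Suc_quartic)
    fix x y
    show "(upper_form b (Suc n) (x(n := y))) ^ 4 = (?O x) ^ 4 + 4 * (?O x) ^ 3 * ?L x * y
      + 6 * ((?O x)\<^sup>2 * (?L x)\<^sup>2) * y\<^sup>2 + 4 * ?O x * (?L x) ^ 3 * y ^ 3 + (?L x) ^ 4 * y ^ 4"
      by (simp add: forms_Suc_upd) algebra
  qed (intro has_all_moments_integrable has_all_moments_intros has_all_moments_forms; simp)+
  then show ?thesis by simp
qed

lemma integral_upper_form_pow4_le:
  "(\<integral>x. (upper_form b n x) ^ 4 \<partial>std_gauss_vec n) \<le> 36 * (upper_sq_sum b n)\<^sup>2"
proof (induction n)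
  case 0
  then show ?case by (simp add: upper_form_def)
next
  case (Suc n)
  let ?O = "upper_form b n" and ?L = "lin_form (\<lambda>i. b i n) n"
  define F where "F = upper_sq_sum b n"
  define \<beta> where "\<beta> = (\<Sum>i<n. (b i n)\<^sup>2)"
  have "0 \<le> F" unfolding F_def by (rule upper_sq_sum_nonneg)
  have "0 \<le> \<beta>" unfolding \<beta>_def by (intro sum_nonneg) auto
  have O4: "(\<integral>x. (?O x) ^ 4 \<partial>std_gauss_vec n) \<le> 36 * F\<^sup>2"
    using Suc.IH unfolding F_def .
  have L4: "(\<integral>x. (?L x) ^ 4 \<partial>std_gauss_vec n) = 3 * \<beta>\<^sup>2"
    unfolding \<beta>_def by (rule integral_lin_form_pow4)
  \<comment> \<open>Cauchy-Schwarz: the cross term is at most \<open>sqrt (36 F\<^sup>2 * 3 \<beta>\<^sup>2) < 12 F \<beta>\<close>,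
    which is exactly what keeps the constant 36 stable under the induction\<close>
  have "(\<integral>x. (?O x)\<^sup>2 * (?L x)\<^sup>2 \<partial>std_gauss_vec n)\<^sup>2
      \<le> (\<integral>x. ((?O x)\<^sup>2)\<^sup>2 \<partial>std_gauss_vec n) * (\<integral>x. ((?L x)\<^sup>2)\<^sup>2 \<partial>std_gauss_vec n)"
    by (intro integral_mult_sq_le has_all_moments_measurable has_all_moments_integrable
        has_all_moments_intros has_all_moments_forms; simp)
  also have "\<dots> \<le> (36 * F\<^sup>2) * (3 * \<beta>\<^sup>2)"
    using mult_right_mono[OF O4, of "3 * \<beta>\<^sup>2"] L4 by (simp add: power_mult[symmetric])
  also have "\<dots> \<le> (12 * F * \<beta>)\<^sup>2"
    by (simp add: power_mult_distrib)
  finally have cross: "(\<integral>x. (?O x)\<^sup>2 * (?L x)\<^sup>2 \<partial>std_gauss_vec n) \<le> 12 * F * \<beta>"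
    by (rule power2_le_imp_le) (simp add: \<open>0 \<le> F\<close> \<open>0 \<le> \<beta>\<close>)
  have "upper_sq_sum b (Suc n) = F + \<beta>"
    unfolding F_def \<beta>_def upper_sq_sum_def by simp
  then have "36 * (upper_sq_sum b (Suc n))\<^sup>2 = 36 * F\<^sup>2 + 6 * (12 * F * \<beta>) + 36 * \<beta>\<^sup>2"
    by (simp add: power2_eq_square algebra_simps)
  then show ?case
    using integral_upper_form_Suc_pow4[of n b] O4 L4 cross zero_le_power2[of \<beta>] by linarith
qed

text \<open>A crude bound (Cauchy-Schwarz twice and \<open>E z\<^sup>8 = 105\<close>); its factor \<open>n\<^sup>2\<close> is the
  source of the \<open>d\<^sup>2\<close> in the theorem.\<close>

lemma integral_diag_form_pow4_le:
  "(\<integral>x. (diag_form a n x) ^ 4 \<partial>std_gauss_vec n) \<le> 105 * (real n)\<^sup>2 * (\<Sum>i<n. (a i)\<^sup>2)\<^sup>2"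
proof -
  define A where "A = (\<Sum>i<n. (a i)\<^sup>2)"
  have pointwise: "(diag_form a n x) ^ 4 \<le> A\<^sup>2 * real n * (\<Sum>i<n. (x i) ^ 8)" for x
  proof -
    define S where "S = (\<Sum>i<n. ((x i)\<^sup>2)\<^sup>2)"
    have "(diag_form a n x)\<^sup>2 \<le> A * S"
      unfolding diag_form_def A_def S_def by (rule Cauchy_Schwarz_ineq_sum)
    then have "(diag_form a n x) ^ 4 \<le> A\<^sup>2 * S\<^sup>2"
      using power_mono[of "(diag_form a n x)\<^sup>2" "A * S" 2]
      by (simp add: power_mult[symmetric] power_mult_distrib)
    also have "S\<^sup>2 \<le> (\<Sum>i<n. 1\<^sup>2) * (\<Sum>i<n. (((x i)\<^sup>2)\<^sup>2)\<^sup>2)"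
      using Cauchy_Schwarz_ineq_sum[of "\<lambda>_. 1" "\<lambda>i. ((x i)\<^sup>2)\<^sup>2" "{..<n}"] unfolding S_def by simp
    then have "A\<^sup>2 * S\<^sup>2 \<le> A\<^sup>2 * (real n * (\<Sum>i<n. (x i) ^ 8))"
      by (intro mult_left_mono) (simp_all add: power_mult[symmetric])
    finally show ?thesis by simp
  qed
  have "(\<integral>x. (diag_form a n x) ^ 4 \<partial>std_gauss_vec n)
      \<le> (\<integral>x. A\<^sup>2 * real n * (\<Sum>i<n. (x i) ^ 8) \<partial>std_gauss_vec n)"
    by (intro integral_mono pointwise has_all_moments_integrable has_all_moments_intros
        has_all_moments_forms has_all_moments_coordinate) simp_all
  also have "\<dots> = A\<^sup>2 * real n * (\<Sum>i<n. \<integral>x. (x i) ^ 8 \<partial>std_gauss_vec n)"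
  proof -
    have "(\<integral>x. (\<Sum>i<n. (x i) ^ 8) \<partial>std_gauss_vec n) = (\<Sum>i<n. \<integral>x. (x i) ^ 8 \<partial>std_gauss_vec n)"
      by (intro Bochner_Integration.integral_sum has_all_moments_integrable has_all_moments_intros
          has_all_moments_coordinate) simp_all
    then show ?thesis by simp
  qed
  also have "(\<Sum>i<n. \<integral>x. (x i) ^ 8 \<partial>std_gauss_vec n) = (\<Sum>i<n. 105)"
  proof (intro sum.cong refl)
    fix i assume "i \<in> {..<n}"
    then have "(\<integral>x. (x i) ^ 8 \<partial>std_gauss_vec n) = (\<integral>y. y ^ 8 \<partial>std_gauss)"
      using std_gauss_vec_marginal(2)[of i n "\<lambda>y. y ^ 8"] by simp
    also have "\<dots> = 105"
      using integral_std_gauss_power(2)[of 8] integral_std_normal_moment_even[of 4]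
      by (simp add: fact_numeral)
    finally show "(\<integral>x. (x i) ^ 8 \<partial>std_gauss_vec n) = 105" .
  qed
  finally show ?thesis unfolding A_def by (simp add: power2_eq_square mult_ac)
qed

lemma power4_add_le:
  fixes a b :: real
  shows "(a + b) ^ 4 \<le> 8 * (a ^ 4 + b ^ 4)"
proof -
  have "8 * (a ^ 4 + b ^ 4) - (a + b) ^ 4 = (a - b)\<^sup>2 * (5 * (a + b)\<^sup>2 + 2 * a\<^sup>2 + 2 * b\<^sup>2)"
    by algebra
  also have "\<dots> \<ge> 0" by simp
  finally show ?thesis by simp
qed

lemma integral_quad_form_pow4_le:
  "(\<integral>x. (quad_form a b n x) ^ 4 \<partial>std_gauss_vec n)
    \<le> 8 * (105 * (real n)\<^sup>2 * (\<Sum>i<n. (a i)\<^sup>2)\<^sup>2 + 36 * (upper_sq_sum b n)\<^sup>2)"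
proof -
  have "(\<integral>x. (quad_form a b n x) ^ 4 \<partial>std_gauss_vec n)
      \<le> (\<integral>x. 8 * ((diag_form a n x) ^ 4 + (upper_form b n x) ^ 4) \<partial>std_gauss_vec n)"
    unfolding quad_form_def
    by (intro integral_mono power4_add_le has_all_moments_integrable has_all_moments_intros
        has_all_moments_forms) simp_all
  also have "\<dots> = 8 * ((\<integral>x. (diag_form a n x) ^ 4 \<partial>std_gauss_vec n)
      + (\<integral>x. (upper_form b n x) ^ 4 \<partial>std_gauss_vec n))"
    by (simp add: Bochner_Integration.integral_add has_all_moments_integrable has_all_moments_intros
        has_all_moments_forms)
  also have "\<dots> \<le> 8 * (105 * (real n)\<^sup>2 * (\<Sum>i<n. (a i)\<^sup>2)\<^sup>2 + 36 * (upper_sq_sum b n)\<^sup>2)"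
    using integral_diag_form_pow4_le[of n a] integral_upper_form_pow4_le[of n b] by simp
  finally show ?thesis .
qed

section \<open>The svec feature of a Gaussian vector\<close>

lemma sum_svec_idx: "(\<Sum>p\<in>svec_idx d. g p) = (\<Sum>j<d. g (j, j) + (\<Sum>i<j. g (i, j)))"
proof (induction d)
  case 0
  then show ?case by (simp add: svec_idx_def)
next
  case (Suc d)
  have "svec_idx (Suc d) = svec_idx d \<union> (\<lambda>i. (i, d)) ` {..d}"
    unfolding svec_idx_def by auto
  moreover have "finite (svec_idx d)"
    by (rule finite_subset[of _ "{..<d} \<times> {..<d}"]) (auto simp: svec_idx_def)
  moreover have "svec_idx d \<inter> (\<lambda>i. (i, d)) ` {..d} = {}"
    unfolding svec_idx_def by auto
  ultimately have "(\<Sum>p\<in>svec_idx (Suc d). g p) = (\<Sum>p\<in>svec_idx d. g p) + (\<Sum>i\<le>d. g (i, d))"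
    by (simp add: sum.union_disjoint sum.reindex inj_on_def)
  also have "(\<Sum>i\<le>d. g (i, d)) = g (d, d) + (\<Sum>i<d. g (i, d))"
    by (simp add: lessThan_Suc_atMost[symmetric] add.commute)
  finally show ?case using Suc.IH by simp
qed

definition inner_svec_outer :: "(nat \<times> nat \<Rightarrow> real) \<Rightarrow> nat \<Rightarrow> (nat \<Rightarrow> real) \<Rightarrow> real" where
  "inner_svec_outer v d z = (\<Sum>p\<in>svec_idx d. v p * svec (outer z) p)"

lemma inner_svec_outer_eq_quad_form:
  "inner_svec_outer v d = quad_form (\<lambda>i. v (i, i)) (\<lambda>i j. sqrt 2 * v (i, j)) d"
  unfolding inner_svec_outer_def[abs_def] sum_svec_idx quad_form_def[abs_def] diag_form_def
    upper_form_def lin_form_def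
  by (simp add: svec_def outer_def sum.distrib sum_distrib_left sum_distrib_right
      power2_eq_square mult_ac)

lemma sum_svec_idx_sq:
  "(\<Sum>p\<in>svec_idx d. (v p)\<^sup>2) = (\<Sum>i<d. (v (i, i))\<^sup>2) + upper_sq_sum (\<lambda>i j. sqrt 2 * v (i, j)) d / 2"
  unfolding sum_svec_idx upper_sq_sum_def
  by (simp add: sum.distrib power_mult_distrib sum_divide_distrib)

lemma svec_unit_dim_pos:
  fixes v :: "nat \<times> nat \<Rightarrow> real"
  shows "(\<Sum>p\<in>svec_idx d. (v p)\<^sup>2) = 1 \<Longrightarrow> 0 < d"
  by (cases d) (simp_all add: svec_idx_def)

lemma inner_svec_outer_moments:
  fixes v :: "nat \<times> nat \<Rightarrow> real"
  assumes unit: "(\<Sum>p\<in>svec_idx d. (v p)\<^sup>2) = 1"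
  shows "has_all_moments (std_gauss_vec d) (inner_svec_outer v d)"
    and "2 \<le> (\<integral>z. (inner_svec_outer v d z)\<^sup>2 \<partial>std_gauss_vec d)"
    and "(\<integral>z. ((inner_svec_outer v d z)\<^sup>2)\<^sup>2 \<partial>std_gauss_vec d) \<le> 2000 * (real d)\<^sup>2"
proof -
  define a where "a = (\<lambda>i. v (i, i))"
  define b where "b = (\<lambda>i j. sqrt 2 * v (i, j))"
  define A where "A = (\<Sum>i<d. (a i)\<^sup>2)"
  define F where "F = upper_sq_sum b d"
  have Y_eq: "inner_svec_outer v d = quad_form a b d"
    unfolding a_def b_def by (rule inner_svec_outer_eq_quad_form)
  have "A + F / 2 = 1"
    using unit sum_svec_idx_sq[of v d] unfolding A_def F_def a_def b_def by simp
  moreover have "0 \<le> A" unfolding A_def by (intro sum_nonneg) auto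
  moreover have "0 \<le> F" unfolding F_def by (rule upper_sq_sum_nonneg)
  ultimately have "A\<^sup>2 \<le> 1\<^sup>2" and "F\<^sup>2 \<le> 2\<^sup>2"
    by (intro power_mono; linarith)+
  show "has_all_moments (std_gauss_vec d) (inner_svec_outer v d)"
    unfolding Y_eq by (intro has_all_moments_forms) simp
  have "(\<integral>z. (inner_svec_outer v d z)\<^sup>2 \<partial>std_gauss_vec d) = (\<Sum>i<d. a i)\<^sup>2 + 2 * A + F"
    unfolding Y_eq A_def F_def by (rule integral_quad_form_sq)
  with \<open>A + F / 2 = 1\<close> zero_le_power2[of "\<Sum>i<d. a i"]
  show "2 \<le> (\<integral>z. (inner_svec_outer v d z)\<^sup>2 \<partial>std_gauss_vec d)"
    by linarith
  have "(\<integral>z. ((inner_svec_outer v d z)\<^sup>2)\<^sup>2 \<partial>std_gauss_vec d)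
      \<le> 8 * (105 * (real d)\<^sup>2 * A\<^sup>2 + 36 * F\<^sup>2)"
    using integral_quad_form_pow4_le[of d a b] unfolding Y_eq A_def F_def
    by (simp add: power_mult[symmetric])
  also have "\<dots> \<le> 8 * (105 * (real d)\<^sup>2 + 36 * 4)"
    using \<open>A\<^sup>2 \<le> 1\<^sup>2\<close> \<open>F\<^sup>2 \<le> 2\<^sup>2\<close> mult_left_mono[OF _ zero_le_power2, of "A\<^sup>2" 1 "real d"]
    by simp
  also have "\<dots> \<le> 2000 * (real d)\<^sup>2"
  proof -
    have "1 \<le> real d" using svec_unit_dim_pos[OF unit] by simp
    then have "1 \<le> (real d)\<^sup>2" by (rule one_le_power)
    then show ?thesis by simp
  qed
  finally show "(\<integral>z. ((inner_svec_outer v d z)\<^sup>2)\<^sup>2 \<partial>std_gauss_vec d) \<le> 2000 * (real d)\<^sup>2" .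
qed

theorem lemma2:
  shows "\<exists>c::real>0. \<forall>(d::nat) (T::nat) (v::nat \<times> nat \<Rightarrow> real) (\<delta>::real).
    (\<Sum>p\<in>svec_idx d. (v p)\<^sup>2) = 1 \<longrightarrow> 0 < \<delta> \<longrightarrow> \<delta> < 1 \<longrightarrow>
    measure (gauss_sample T d)
      {x \<in> space (gauss_sample T d).
         (\<Sum>t<T. (\<Sum>p\<in>svec_idx d. v p * svec (outer (x t)) p)\<^sup>2)
           \<ge> 2 * real T - sqrt (c * real T * (real d)\<^sup>2 * ln (1 / \<delta>))}
    \<ge> 1 - \<delta>"
proof (intro exI[of _ 4000] conjI allI impI)
  fix d T :: nat and v :: "nat \<times> nat \<Rightarrow> real" and \<delta> :: real
  assume unit: "(\<Sum>p\<in>svec_idx d. (v p)\<^sup>2) = 1" and "0 < \<delta>" "\<delta> < 1"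
  let ?Y = "inner_svec_outer v d"
  note moments = inner_svec_outer_moments[OF unit]
  have "1 - \<delta> \<le> measure (PiM {..<T} (\<lambda>_. std_gauss_vec d))
      {x \<in> space (PiM {..<T} (\<lambda>_. std_gauss_vec d)). (\<Sum>t<T. (?Y (x t))\<^sup>2)
        \<ge> real T * 2 - sqrt (2 * real T * (2000 * (real d)\<^sup>2) * ln (1 / \<delta>))}"
  proof (rule measure_PiM_sum_lower_tail)
    show "integrable (std_gauss_vec d) (\<lambda>z. (?Y z)\<^sup>2)"
      and "integrable (std_gauss_vec d) (\<lambda>z. ((?Y z)\<^sup>2)\<^sup>2)"
      using moments(1) by (intro has_all_moments_integrable has_all_moments_intros; simp)+
  qed (use moments(2,3) svec_unit_dim_pos[OF unit] \<open>0 < \<delta>\<close> \<open>\<delta> < 1\<close> prob_space_std_gauss_vec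
      in auto)
  then show "1 - \<delta> \<le> measure (gauss_sample T d)
      {x \<in> space (gauss_sample T d). (\<Sum>t<T. (\<Sum>p\<in>svec_idx d. v p * svec (outer (x t)) p)\<^sup>2)
        \<ge> 2 * real T - sqrt (4000 * real T * (real d)\<^sup>2 * ln (1 / \<delta>))}"
    unfolding gauss_sample_def std_gauss_vec_def[symmetric] inner_svec_outer_def
    by (simp add: mult_ac)
qed simp

end
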